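(* For every $n\in\mathcal{N}_{z_q}$, \[ |\Gamma_{z_q,n}|=c_n\, r_K(n-2\lambda^2)\, r_K(n+2\lambda^2), \] where $c_n=1/2$ if either ($q$ is even and $2\mid n$) or ($q$ is odd and $q\mid 2n$), and $c_n=1/4$ otherwise. (Here $n\pm2\lambda^2$ are non-negative integers, and $r_K(0)=1$.)
   Context: Let $q\in\{3,4,7,8,11,19,43,67,163\}$ and let $K$ be the imaginary quadratic field of discriminant $-q$ (class number one), with ring of integers $\mathcal{O}_K$ and norm $N$. For an integer $M\geq 0$, $r_K(M)$ denotes the number of $\alpha\in\mathcal{O}_K$ with $N(\alpha)=M$. Let $z_q=\mu+i\lambda$ where $\mu=0$ if $q\in\{4,8\}$, $\mu=1/2$ otherwise, and $\lambda=\sqrt{q}/2$. Let $\mathbb{H}$ be the upper half-plane with hyperbolic distance $\rho$, $\cosh\rho(z,w)=1+\frac{|z-w|^2}{2\,\mathrm{Im}(z)\mathrm{Im}(w)}$, and $\Gamma=\mathrm{PSL}(2,\mathbb{Z})$ acting by Möbius transformations. For $\gamma\in\Gamma$ set $\mathcal{R}(\gamma;z_q)=2\lambda^2\cosh\rho(z_q,\gamma z_q)$, $\mathcal{N}_{z_q}=\{\mathcal{R}(\gamma;z_q):\gamma\in\Gamma\}$, and $\Gamma_{z_q,n}=\{\gamma\in\Gamma:\mathcal{R}(\gamma;z_q)=n\}$. *)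

theory Defs
  imports Complex_Main
begin

text \<open>The admissible values of q (class number one, discriminant -q).\<close>
definition q_vals :: "nat set" where
  "q_vals = {3,4,7,8,11,19,43,67,163}"

text \<open>Generator of the ring of integers O_K of K = Q(sqrt(-q)), embedded in C:
  O_K = Z[(1+sqrt(-q))/2] for q odd, O_K = Z[sqrt(-q/4)] for q in {4,8}.\<close>
definition omegaK :: "nat \<Rightarrow> complex" where
  "omegaK q = (if odd q then Complex (1/2) (sqrt (real q) / 2)
               else Complex 0 (sqrt (real q / 4)))"

definition OK :: "nat \<Rightarrow> complex set" where
  "OK q = {of_int a + of_int b * omegaK q | a b :: int. True}"

definition normK :: "complex \<Rightarrow> real" where
  "normK \<alpha> = (cmod \<alpha>)\<^sup>2"

definition rK :: "nat \<Rightarrow> real \<Rightarrow> nat" where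
  "rK q M = card {\<alpha> \<in> OK q. normK \<alpha> = M}"

definition lam :: "nat \<Rightarrow> real" where
  "lam q = sqrt (real q) / 2"

definition mu :: "nat \<Rightarrow> real" where
  "mu q = (if q \<in> {4,8} then 0 else 1/2)"

definition zq :: "nat \<Rightarrow> complex" where
  "zq q = Complex (mu q) (lam q)"

definition cosh_dist :: "complex \<Rightarrow> complex \<Rightarrow> real" where
  "cosh_dist z w = 1 + (cmod (z - w))\<^sup>2 / (2 * Im z * Im w)"

definition SL2Z :: "(int \<times> int \<times> int \<times> int) set" where
  "SL2Z = {(a,b,c,d). a * d - b * c = 1}"

fun negm :: "int \<times> int \<times> int \<times> int \<Rightarrow> int \<times> int \<times> int \<times> int" where
  "negm (a,b,c,d) = (-a,-b,-c,-d)"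

definition PSL2Z :: "(int \<times> int \<times> int \<times> int) set set" where
  "PSL2Z = (\<lambda>g. {g, negm g}) ` SL2Z"

fun mob :: "int \<times> int \<times> int \<times> int \<Rightarrow> complex \<Rightarrow> complex" where
  "mob (a,b,c,d) z = (of_int a * z + of_int b) / (of_int c * z + of_int d)"

text \<open>Action of an element of PSL(2,Z) (independent of the representative).\<close>
definition pact :: "(int \<times> int \<times> int \<times> int) set \<Rightarrow> complex \<Rightarrow> complex" where
  "pact \<gamma> z = mob (SOME g. g \<in> \<gamma>) z"

definition Rq :: "nat \<Rightarrow> (int \<times> int \<times> int \<times> int) set \<Rightarrow> real" where
  "Rq q \<gamma> = 2 * (lam q)\<^sup>2 * cosh_dist (zq q) (pact \<gamma> (zq q))"

definition Nset :: "nat \<Rightarrow> real set" where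
  "Nset q = Rq q ` PSL2Z"

definition Gamma_n :: "nat \<Rightarrow> real \<Rightarrow> (int \<times> int \<times> int \<times> int) set set" where
  "Gamma_n q n = {\<gamma> \<in> PSL2Z. Rq q \<gamma> = n}"

definition cn :: "nat \<Rightarrow> real \<Rightarrow> real" where
  "cn q n = (if (even q \<and> (\<exists>k::int. n = 2 * of_int k)) \<or>
                (odd q \<and> (\<exists>k::int. 2 * n = real q * of_int k))
             then 1/2 else 1/4)"

end

theory Submission
  imports Defs "HOL-Computational_Algebra.Primes"
begin

text \<open>Write z = z_q, z' for its conjugate and identify \<gamma> with (a,b,c,d) in SL(2,Z). The numbers
  \<alpha> = z(cz+d) - (az+b) and \<beta> = z(cz'+d) - (az'+b) lie in O_K, and a direct computation gives
  R(\<gamma>; z) = 2\<lambda>^2 + N(\<alpha>) and N(\<beta>) = N(\<alpha>) + q(ad - bc). Conversely \<gamma> is recovered linearly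
  from (\<alpha>, \<beta>), so the matrices with R = n correspond to the pairs with N(\<alpha>) = n - 2\<lambda>^2 and
  N(\<beta>) = n + 2\<lambda>^2 satisfying one congruence. When c_n = 1/2 this congruence holds for every
  such pair; otherwise, for fixed \<alpha>, a norm-preserving involution of \<beta> (\<beta> \<mapsto> -\<beta>, or a
  coordinate swap or sign change for q = 4, 8) exchanges the \<beta> that satisfy it with those that
  do not. Passing from SL(2,Z) to PSL(2,Z) halves the count.\<close>

lemma complex_mult_self: "z * z = of_real (2 * Re z) * z - of_real ((cmod z)\<^sup>2)"
  unfolding cmod_power2 by (simp add: complex_eq_iff power2_eq_square algebra_simps)

lemma cmod_int_combination_squared:
  "(cmod (of_int x + of_int y * z))\<^sup>2 = x\<^sup>2 + x * y * (2 * Re z) + y\<^sup>2 * (cmod z)\<^sup>2"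
  unfolding cmod_power2 by (simp add: power2_eq_square algebra_simps)

lemma cosh_dist_mob:
  fixes a b c d :: int and z :: complex
  assumes det: "a * d - b * c = 1" and z: "Im z > 0"
  shows "2 * (Im z)\<^sup>2 * cosh_dist z (mob (a, b, c, d) z)
           = 2 * (Im z)\<^sup>2 + (cmod (z * (of_int c * z + of_int d) - (of_int a * z + of_int b)))\<^sup>2"
proof -
  define D where "D = of_int c * z + of_int d"
  define N where "N = of_int a * z + of_int b"
  have "Im D = c * Im z" "Re D = c * Re z + d"
    unfolding D_def by simp_all
  then have "D \<noteq> 0"
    using det z by (auto simp: complex_eq_iff)
  have "Im N * Re D - Re N * Im D = (a * d - b * c) * Im z"
    unfolding N_def D_def by (simp add: algebra_simps)
  then have Im_mob: "Im (N / D) = Im z / (cmod D)\<^sup>2"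
    using det by (simp add: Im_divide')
  have "z - N / D = (z * D - N) / D"
    using \<open>D \<noteq> 0\<close> by (simp add: field_simps)
  then have "(cmod (z - N / D))\<^sup>2 = (cmod (z * D - N))\<^sup>2 / (cmod D)\<^sup>2"
    by (simp add: norm_divide power_divide)
  then have "2 * (Im z)\<^sup>2 * cosh_dist z (N / D) = 2 * (Im z)\<^sup>2 + (cmod (z * D - N))\<^sup>2"
    unfolding cosh_dist_def Im_mob using \<open>D \<noteq> 0\<close> z
    by (simp add: field_simps power2_eq_square)
  then show ?thesis unfolding N_def D_def by simp
qed

lemma abs_le_square_int: "\<bar>t::int\<bar> \<le> t\<^sup>2"
  by (cases "t = 0") (use self_le_power[of "\<bar>t\<bar>" 2] in auto)

lemma prime_dvd_diff_iff_not_dvd_sum: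
  fixes p s t :: int
  assumes p: "prime p" and "p dvd s\<^sup>2 - t\<^sup>2" and "\<not> p dvd 2 * t"
  shows "p dvd s - t \<longleftrightarrow> \<not> p dvd s + t"
proof -
  have "p dvd (s - t) * (s + t)"
    using assms(2) by (simp add: power2_eq_square algebra_simps)
  then have "p dvd s - t \<or> p dvd s + t"
    using p by (simp add: prime_dvd_mult_iff)
  moreover have "\<not> (p dvd s - t \<and> p dvd s + t)"
  proof
    assume "p dvd s - t \<and> p dvd s + t"
    then have "p dvd (s + t) - (s - t)" by (blast intro: dvd_diff)
    moreover have "(s + t) - (s - t) = 2 * t" by simp
    ultimately show False using assms(3) by simp
  qed
  ultimately show ?thesis by blast
qed

lemma square_mod_4: "\<exists>k. (z::int)\<^sup>2 = 4 * k + (if even z then 0 else 1)"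
proof (cases "even z")
  case True
  then obtain t where "z = 2 * t" by (auto elim: evenE)
  then show ?thesis using True by (intro exI[of _ "t\<^sup>2"]) (simp add: power2_eq_square)
next
  case False
  then obtain t where "z = 2 * t + 1" by (auto elim: oddE)
  then show ?thesis using False by (intro exI[of _ "t\<^sup>2 + t"]) (simp add: power2_eq_square algebra_simps)
qed

lemma odd_square_mod_8: "odd (z::int) \<Longrightarrow> \<exists>k. z\<^sup>2 = 8 * k + 1"
proof -
  assume "odd z"
  then obtain t where t: "z = 2 * t + 1" by (auto elim: oddE)
  obtain s where "t * (t + 1) = 2 * s" by (metis dvdE even_mult_iff odd_add odd_one)
  moreover have "z\<^sup>2 = 4 * (t * (t + 1)) + 1"
    unfolding t by (simp add: power2_eq_square algebra_simps)
  ultimately show ?thesis by auto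
qed

lemma even_square_mod_16:
  "even (z::int) \<Longrightarrow> \<exists>t k. z = 2 * t \<and> z\<^sup>2 = 16 * k + (if even t then 0 else 4)"
proof -
  assume "even z"
  then obtain t where t: "z = 2 * t" by (auto elim: evenE)
  obtain k where "t\<^sup>2 = 4 * k + (if even t then 0 else 1)" using square_mod_4 by blast
  then have "z\<^sup>2 = 16 * k + (if even t then 0 else 4)" unfolding t by (simp add: power_mult_distrib)
  then show ?thesis using t by blast
qed

lemma card_half_by_involution:
  assumes "finite V" and maps_to: "\<And>v. v \<in> V \<Longrightarrow> s v \<in> V" and inv: "\<And>v. v \<in> V \<Longrightarrow> s (s v) = v"
    and swap: "\<And>v. v \<in> V \<Longrightarrow> P v \<longleftrightarrow> \<not> P (s v)"
  shows "2 * card {v \<in> V. P v} = card V"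
proof -
  have "bij_betw s {v \<in> V. P v} {v \<in> V. \<not> P v}"
    by (rule bij_betw_byWitness[where f' = s]) (use maps_to inv swap in auto)
  then have same: "card {v \<in> V. \<not> P v} = card {v \<in> V. P v}"
    by (simp add: bij_betw_same_card)
  have "card V = card ({v \<in> V. P v} \<union> {v \<in> V. \<not> P v})"
    by (rule arg_cong[where f = card]) auto
  also have "\<dots> = card {v \<in> V. P v} + card {v \<in> V. \<not> P v}"
    using \<open>finite V\<close> by (intro card_Un_disjoint) auto
  finally show ?thesis using same by simp
qed

definition omega_trace :: "nat \<Rightarrow> int" where
  "omega_trace q = (if odd q then 1 else 0)"

definition omega_norm :: "nat \<Rightarrow> int" where
  "omega_norm q = (if odd q then (int q + 1) div 4 else int q div 4)"

lemma prime_odd_q_vals: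
  "prime (3::nat)" "prime (7::nat)" "prime (11::nat)" "prime (19::nat)"
  "prime (43::nat)" "prime (67::nat)" "prime (163::nat)"
  by (simp_all only: prime_nat_iff' atLeastLessThan_upt) (simp_all add: upt_rec)

lemma q_vals_cases:
  assumes "q \<in> q_vals"
  obtains (odd) "odd q" "prime q" "int q = 4 * omega_norm q - 1"
        | (even) "even q" "q = 4 \<or> q = 8" "int q = 4 * omega_norm q"
  using assms prime_odd_q_vals unfolding q_vals_def omega_norm_def by auto

lemma q_vals_odd_or_four_or_eight:
  assumes "q \<in> q_vals"
  obtains (odd) "odd q" | (four) "q = 4" | (eight) "q = 8"
  using assms by (cases rule: q_vals_cases) auto

lemma q_eq_omega_norm: "q \<in> q_vals \<Longrightarrow> int q = 4 * omega_norm q - omega_trace q"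
  by (cases rule: q_vals_cases) (auto simp: omega_trace_def)

lemma omega_trace_square: "(omega_trace q)\<^sup>2 = omega_trace q"
  by (simp add: omega_trace_def)

lemma q_vals_pos: "q \<in> q_vals \<Longrightarrow> q > 0"
  unfolding q_vals_def by auto

lemma omega_norm_pos: "q \<in> q_vals \<Longrightarrow> omega_norm q > 0"
  unfolding q_vals_def omega_norm_def by auto

lemma lam_squared: "(lam q)\<^sup>2 = real q / 4"
  unfolding lam_def by (simp add: power_divide)

lemma lam_pos: "q \<in> q_vals \<Longrightarrow> lam q > 0"
  using q_vals_pos unfolding lam_def by auto

lemma Re_zq: "Re (zq q) = mu q" and Im_zq: "Im (zq q) = lam q"
  unfolding zq_def by simp_all

lemma omegaK_eq_zq: "q \<in> q_vals \<Longrightarrow> omegaK q = zq q"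
  unfolding omegaK_def zq_def mu_def lam_def q_vals_def by (auto simp: real_sqrt_divide)

lemma trace_norm_zq:
  assumes q: "q \<in> q_vals"
  shows "2 * Re (zq q) = of_int (omega_trace q)"
    and "(cmod (zq q))\<^sup>2 = of_int (omega_norm q)"
proof -
  show "2 * Re (zq q) = of_int (omega_trace q)"
    using q by (cases rule: q_vals_cases) (auto simp: Re_zq mu_def omega_trace_def)
  have q_real: "real q = 4 * of_int (omega_norm q) - of_int (omega_trace q)"
    using q_eq_omega_norm[OF q] by (metis of_int_diff of_int_mult of_int_numeral of_int_of_nat_eq)
  have cmod_zq: "(cmod (zq q))\<^sup>2 = (mu q)\<^sup>2 + real q / 4"
    by (simp add: cmod_power2 Re_zq Im_zq lam_squared)
  have "(mu q)\<^sup>2 = of_int (omega_trace q) / 4"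
    using q by (cases rule: q_vals_cases) (auto simp: mu_def omega_trace_def power2_eq_square)
  then show "(cmod (zq q))\<^sup>2 = of_int (omega_norm q)"
    using q_real cmod_zq by (simp add: field_simps)
qed

lemma zq_mult_self:
  "q \<in> q_vals \<Longrightarrow> zq q * zq q = of_int (omega_trace q) * zq q - of_int (omega_norm q)"
  using complex_mult_self[of "zq q"] by (simp add: trace_norm_zq)

fun norm_form :: "nat \<Rightarrow> int \<times> int \<Rightarrow> int" where
  "norm_form q (x, y) = x\<^sup>2 + omega_trace q * x * y + omega_norm q * y\<^sup>2"

definition embed :: "nat \<Rightarrow> int \<times> int \<Rightarrow> complex" where
  "embed q p = of_int (fst p) + of_int (snd p) * zq q"

lemma normK_embed: "q \<in> q_vals \<Longrightarrow> normK (embed q (x, y)) = of_int (norm_form q (x, y))"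
  unfolding normK_def embed_def cmod_int_combination_squared by (simp add: trace_norm_zq)

lemma four_norm_form:
  "q \<in> q_vals \<Longrightarrow> 4 * norm_form q (x, y) = (2 * x + omega_trace q * y)\<^sup>2 + int q * y\<^sup>2"
  by (simp add: q_eq_omega_norm power2_eq_square algebra_simps
      omega_trace_square[unfolded power2_eq_square])

lemma inj_embed: assumes "q \<in> q_vals" shows "inj (embed q)"
proof (rule injI)
  fix p p' assume "embed q p = embed q p'"
  then have "Im (embed q p) = Im (embed q p')" "Re (embed q p) = Re (embed q p')" by simp_all
  then show "p = p'"
    using lam_pos[OF assms] unfolding embed_def by (simp add: prod_eq_iff Re_zq Im_zq)
qed

definition reps :: "nat \<Rightarrow> int \<Rightarrow> (int \<times> int) set" where
  "reps q A = {p. norm_form q p = A}"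

lemma rK_eq_card_reps: assumes q: "q \<in> q_vals" shows "rK q (of_int A) = card (reps q A)"
proof -
  have norm_eq: "normK (embed q p) = of_int A \<longleftrightarrow> norm_form q p = A" for p
    by (cases p) (simp only: normK_embed[OF q] of_int_eq_iff)
  have "OK q = range (embed q)"
    unfolding OK_def embed_def omegaK_eq_zq[OF q] by (auto simp: image_iff) (metis fst_conv snd_conv)
  then have "{\<alpha> \<in> OK q. normK \<alpha> = of_int A} = embed q ` reps q A"
    unfolding reps_def using norm_eq by auto
  then show ?thesis
    unfolding rK_def using card_image[OF inj_on_subset[OF inj_embed[OF q]]] by simp
qed

lemma finite_reps: assumes q: "q \<in> q_vals" shows "finite (reps q A)"
proof -
  define B where "B = 4 * \<bar>A\<bar>"
  have "\<bar>x\<bar> \<le> B \<and> \<bar>y\<bar> \<le> B" if "(x, y) \<in> reps q A" for x y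
  proof -
    have "(2 * x + omega_trace q * y)\<^sup>2 + int q * y\<^sup>2 = 4 * A"
      using that four_norm_form[OF q, of x y] by (simp add: reps_def)
    moreover have "y\<^sup>2 \<le> int q * y\<^sup>2"
      using q_vals_pos[OF q] by (simp add: mult_le_cancel_right1)
    ultimately have "\<bar>2 * x + omega_trace q * y\<bar> \<le> 4 * A" "\<bar>y\<bar> \<le> 4 * A"
      using abs_le_square_int[of y] abs_le_square_int[of "2 * x + omega_trace q * y"]
      by (smt (verit) zero_le_power2)+
    moreover have "\<bar>omega_trace q * y\<bar> \<le> \<bar>y\<bar>"
      by (simp add: omega_trace_def)
    ultimately show ?thesis unfolding B_def by linarith
  qed
  then have "reps q A \<subseteq> {-B..B} \<times> {-B..B}" by (force simp: abs_le_iff)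
  then show ?thesis by (rule finite_subset) simp
qed

definition R_SL :: "nat \<Rightarrow> int \<times> int \<times> int \<times> int \<Rightarrow> real" where
  "R_SL q g = 2 * (lam q)\<^sup>2 * cosh_dist (zq q) (mob g (zq q))"

text \<open>The coordinates, in the basis 1, z, of z(cz+d) - (az+b) and z(cz'+d) - (az'+b),
  where z = zq q and z' is its conjugate.\<close>
fun matrix_to_pair :: "nat \<Rightarrow> int \<times> int \<times> int \<times> int \<Rightarrow> (int \<times> int) \<times> (int \<times> int)" where
  "matrix_to_pair q (a, b, c, d) =
     ((- (c * omega_norm q + b), c * omega_trace q + d - a),
      (c * omega_norm q - a * omega_trace q - b, a + d))"

lemma embed_fst_matrix_to_pair:
  assumes "q \<in> q_vals"
  shows "embed q (fst (matrix_to_pair q (a, b, c, d)))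
           = zq q * (of_int c * zq q + of_int d) - (of_int a * zq q + of_int b)"
proof -
  have "zq q * (of_int c * zq q + of_int d) - (of_int a * zq q + of_int b)
        = of_int c * (zq q * zq q) + (of_int d - of_int a) * zq q - of_int b"
    by (simp add: algebra_simps)
  then show ?thesis
    unfolding zq_mult_self[OF assms] embed_def by (simp add: algebra_simps)
qed

lemma norm_form_snd_matrix_to_pair:
  assumes "q \<in> q_vals"
  shows "norm_form q (snd (matrix_to_pair q (a, b, c, d)))
           = norm_form q (fst (matrix_to_pair q (a, b, c, d))) + int q * (a * d - b * c)"
  unfolding q_eq_omega_norm[OF assms]
  by (simp add: omega_trace_def power2_eq_square algebra_simps)

lemma R_SL_eq:
  assumes q: "q \<in> q_vals" and g: "g \<in> SL2Z"
  shows "R_SL q g = real q / 2 + of_int (norm_form q (fst (matrix_to_pair q g)))"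
proof (cases g rule: prod_cases4)
  case (fields a b c d)
  have "R_SL q g = 2 * (lam q)\<^sup>2 + normK (embed q (fst (matrix_to_pair q g)))"
    using cosh_dist_mob[of a d b c "zq q"] g lam_pos[OF q]
    unfolding R_SL_def fields embed_fst_matrix_to_pair[OF q] normK_def
    by (simp add: Im_zq SL2Z_def)
  also have "normK (embed q (fst (matrix_to_pair q g)))
             = of_int (norm_form q (fst (matrix_to_pair q g)))"
    using normK_embed[OF q] by (metis prod.collapse)
  finally show ?thesis by (simp add: lam_squared)
qed

fun compatible :: "nat \<Rightarrow> (int \<times> int) \<times> (int \<times> int) \<Rightarrow> bool" where
  "compatible q ((x1, y1), (x2, y2)) =
     (if odd q then int q dvd 2 * (x2 - x1) + (y2 - y1)
      else 2 dvd y2 - y1 \<and> 2 * omega_norm q dvd x2 - x1)"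

fun pair_to_matrix :: "nat \<Rightarrow> (int \<times> int) \<times> (int \<times> int) \<Rightarrow> int \<times> int \<times> int \<times> int" where
  "pair_to_matrix q ((x1, y1), (x2, y2)) =
     (let c = (2 * (x2 - x1) + omega_trace q * (y2 - y1)) div int q;
          a = (y2 - y1 + c * omega_trace q) div 2
      in (a, - (c * omega_norm q + x1), c, y2 - a))"

lemma compatible_matrix_to_pair:
  assumes "q \<in> q_vals"
  shows "compatible q (matrix_to_pair q g)"
proof (cases g rule: prod_cases4)
  case (fields a b c d)
  from assms show ?thesis
  proof (cases rule: q_vals_cases)
    case odd
    have "2 * ((c * omega_norm q - a - b) - - (c * omega_norm q + b)) + ((a + d) - (c + d - a))
          = int q * c"
      unfolding odd(3) by (simp add: algebra_simps)
    then show ?thesis using odd by (simp add: fields omega_trace_def)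
  next
    case even
    have "(c * omega_norm q - b) - - (c * omega_norm q + b) = 2 * omega_norm q * c" by simp
    then show ?thesis using even by (simp add: fields omega_trace_def)
  qed
qed

lemma pair_to_matrix_to_pair:
  assumes "q \<in> q_vals"
  shows "pair_to_matrix q (matrix_to_pair q g) = g"
proof (cases g rule: prod_cases4)
  case (fields a b c d)
  let ?t = "omega_trace q" and ?m = "omega_norm q"
  have "2 * ((c * ?m - a * ?t - b) - - (c * ?m + b)) + ?t * ((a + d) - (c * ?t + d - a))
        = c * int q"
    unfolding q_eq_omega_norm[OF assms]
    by (simp add: algebra_simps omega_trace_square[unfolded power2_eq_square])
  then have "(2 * ((c * ?m - a * ?t - b) - - (c * ?m + b)) + ?t * ((a + d) - (c * ?t + d - a)))
             div int q = c"
    using q_vals_pos[OF assms] by simp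
  then show ?thesis by (simp add: fields Let_def algebra_simps)
qed

lemma matrix_to_pair_to_matrix:
  assumes q: "q \<in> q_vals" and "compatible q w"
  shows "matrix_to_pair q (pair_to_matrix q w) = w"
proof -
  obtain x1 y1 x2 y2 where w: "w = ((x1, y1), (x2, y2))" by (metis prod.collapse)
  let ?m = "omega_norm q"
  from q show ?thesis
  proof (cases rule: q_vals_cases)
    case odd
    then have t: "omega_trace q = 1" by (simp add: omega_trace_def)
    obtain k where k: "2 * (x2 - x1) + (y2 - y1) = int q * k"
      using assms(2) odd by (auto simp: w elim: dvdE)
    then have c: "(2 * (x2 - x1) + (y2 - y1)) div int q = k"
      using q_vals_pos[OF q] by simp
    have "2 * (x2 - x1) + (y2 - y1) = 4 * (k * ?m) - k"
      using k unfolding odd(3) by (simp add: algebra_simps)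
    then have y2: "y2 = y1 - k + 2 * (2 * (k * ?m) - (x2 - x1))"
      by (simp add: algebra_simps)
    then have a: "(y2 - y1 + k * 1) div 2 = 2 * (k * ?m) - (x2 - x1)"
      by simp
    have "pair_to_matrix q w
          = (2 * (k * ?m) - (x2 - x1), - (k * ?m + x1), k, y2 - (2 * (k * ?m) - (x2 - x1)))"
      unfolding w pair_to_matrix.simps Let_def t mult_1 c a ..
    moreover have "matrix_to_pair q \<dots> = w"
      unfolding w by (simp add: t y2)
    ultimately show ?thesis by simp
  next
    case even
    then have t: "omega_trace q = 0" by (simp add: omega_trace_def)
    have "2 dvd y2 - y1" "2 * ?m dvd x2 - x1"
      using assms(2) even by (simp_all add: w)
    then obtain k l where k: "y2 - y1 = 2 * k" and l: "x2 - x1 = 2 * ?m * l"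
      by (metis dvdE)
    have c: "(2 * (x2 - x1) + 0 * (y2 - y1)) div int q = l"
      unfolding l even(3) using omega_norm_pos[OF q] by simp
    have a: "(y2 - y1 + l * 0) div 2 = k"
      unfolding k by simp
    have "pair_to_matrix q w = (k, - (l * ?m + x1), l, y2 - k)"
      unfolding w pair_to_matrix.simps Let_def t c a ..
    moreover have "matrix_to_pair q \<dots> = w"
      using k l unfolding w by (simp add: t algebra_simps)
    ultimately show ?thesis by simp
  qed
qed

lemma compatible_odd:
  assumes q: "q \<in> q_vals" "odd q"
    and u: "norm_form q (x1, y1) = A" and v: "norm_form q (x2, y2) = A + int q"
  shows "int q dvd A \<Longrightarrow> compatible q ((x1, y1), (x2, y2))"
    and "\<not> int q dvd A \<Longrightarrow>
           compatible q ((x1, y1), (x2, y2)) \<longleftrightarrow> \<not> compatible q ((x1, y1), (- x2, - y2))"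
proof -
  have "prime q"
    using q by (cases rule: q_vals_cases) auto
  then have p: "prime (int q)" by simp
  have t: "omega_trace q = 1"
    using q(2) by (simp add: omega_trace_def)
  have coprime: "coprime (int q) 2" "coprime (int q) 4"
    using q(2) by (simp_all add: coprime_power_right_iff[of _ 2 2, simplified])
  define s1 s2 where "s1 = 2 * x1 + y1" and "s2 = 2 * x2 + y2"
  have "4 * A = s1\<^sup>2 + int q * y1\<^sup>2" "4 * (A + int q) = s2\<^sup>2 + int q * y2\<^sup>2"
    using four_norm_form[OF q(1), of x1 y1] four_norm_form[OF q(1), of x2 y2]
    unfolding u v t s1_def s2_def by simp_all
  then have s1: "s1\<^sup>2 = 4 * A + int q * (- y1\<^sup>2)" and s2: "s2\<^sup>2 = 4 * A + int q * (4 - y2\<^sup>2)"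
    by (simp_all add: algebra_simps)
  have "int q dvd s \<longleftrightarrow> int q dvd A" if "s\<^sup>2 = 4 * A + int q * r" for s r
  proof -
    have "int q dvd s \<longleftrightarrow> int q dvd s\<^sup>2" using p by (simp add: prime_dvd_power_iff)
    also have "\<dots> \<longleftrightarrow> int q dvd 4 * A" unfolding that by (simp add: dvd_add_left_iff)
    also have "\<dots> \<longleftrightarrow> int q dvd A" using coprime(2) by (simp add: coprime_dvd_mult_right_iff)
    finally show ?thesis .
  qed
  note dvd_s = this[OF s1] this[OF s2]
  have "2 * (x2 - x1) + (y2 - y1) = s2 - s1" "2 * (- x2 - x1) + (- y2 - y1) = - (s2 + s1)"
    unfolding s1_def s2_def by simp_all
  then have comp: "compatible q ((x1, y1), (x2, y2)) \<longleftrightarrow> int q dvd s2 - s1"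
    "compatible q ((x1, y1), (- x2, - y2)) \<longleftrightarrow> int q dvd s2 + s1"
    by (simp_all only: compatible.simps if_P[OF q(2)] dvd_minus_iff)
  show "int q dvd A \<Longrightarrow> compatible q ((x1, y1), (x2, y2))"
    using dvd_s unfolding comp by (blast intro: dvd_diff)
  assume "\<not> int q dvd A"
  then have "\<not> int q dvd 2 * s1"
    using dvd_s coprime(1) by (simp add: coprime_dvd_mult_right_iff)
  moreover have "int q dvd s2\<^sup>2 - s1\<^sup>2"
    unfolding s1 s2 by (simp add: algebra_simps)
  ultimately show "compatible q ((x1, y1), (x2, y2)) \<longleftrightarrow> \<not> compatible q ((x1, y1), (- x2, - y2))"
    unfolding comp by (rule prime_dvd_diff_iff_not_dvd_sum[OF p, rotated])
qed

lemma compatible_four: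
  assumes u: "norm_form 4 (x1, y1) = A" and v: "norm_form 4 (x2, y2) = A + 4"
  shows "even A \<Longrightarrow> compatible 4 ((x1, y1), (x2, y2))"
    and "odd A \<Longrightarrow> compatible 4 ((x1, y1), (x2, y2)) \<longleftrightarrow> \<not> compatible 4 ((x1, y1), (y2, x2))"
proof -
  have h1: "x1\<^sup>2 + y1\<^sup>2 = A" and h2: "x2\<^sup>2 + y2\<^sup>2 = A + 4"
    using u v by (simp_all add: omega_trace_def omega_norm_def)
  obtain a1 where a1: "x1\<^sup>2 = 4 * a1 + (if even x1 then 0 else 1)" using square_mod_4 by blast
  obtain b1 where b1: "y1\<^sup>2 = 4 * b1 + (if even y1 then 0 else 1)" using square_mod_4 by blast
  obtain a2 where a2: "x2\<^sup>2 = 4 * a2 + (if even x2 then 0 else 1)" using square_mod_4 by blast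
  obtain b2 where b2: "y2\<^sup>2 = 4 * b2 + (if even y2 then 0 else 1)" using square_mod_4 by blast
  have n1: "4 * a1 + (if even x1 then 0 else 1) + (4 * b1 + (if even y1 then 0 else 1)) = A"
    and n2: "4 * a2 + (if even x2 then 0 else 1) + (4 * b2 + (if even y2 then 0 else 1)) = A + 4"
    using h1 h2 unfolding a1 b1 a2 b2 .
  have comp: "compatible 4 ((a, b), (c, d)) \<longleftrightarrow> 2 dvd d - b \<and> 2 dvd c - a" for a b c d
    by (simp add: omega_norm_def)
  show "even A \<Longrightarrow> compatible 4 ((x1, y1), (x2, y2))"
    using n1 n2 unfolding comp by presburger
  show "odd A \<Longrightarrow> compatible 4 ((x1, y1), (x2, y2)) \<longleftrightarrow> \<not> compatible 4 ((x1, y1), (y2, x2))"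
    using n1 n2 unfolding comp by presburger
qed

lemma compatible_eight:
  assumes u: "norm_form 8 (x1, y1) = A" and v: "norm_form 8 (x2, y2) = A + 8"
  shows "even A \<Longrightarrow> compatible 8 ((x1, y1), (x2, y2))"
    and "odd A \<Longrightarrow> compatible 8 ((x1, y1), (x2, y2)) \<longleftrightarrow> \<not> compatible 8 ((x1, y1), (- x2, y2))"
proof -
  define X1 X2 Y1 Y2 where "X1 = x1\<^sup>2" and "X2 = x2\<^sup>2" and "Y1 = y1\<^sup>2" and "Y2 = y2\<^sup>2"
  have l1: "X1 + 2 * Y1 = A" and l2: "X2 + 2 * Y2 = A + 8"
    using u v unfolding X1_def X2_def Y1_def Y2_def by (simp_all add: omega_trace_def omega_norm_def)
  obtain a1 where a1: "Y1 = 4 * a1 + (if even y1 then 0 else 1)"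
    using square_mod_4 unfolding Y1_def by blast
  obtain a2 where a2: "Y2 = 4 * a2 + (if even y2 then 0 else 1)"
    using square_mod_4 unfolding Y2_def by blast
  obtain c1 where c1: "odd y1 \<longrightarrow> Y1 = 8 * c1 + 1"
    using odd_square_mod_8 unfolding Y1_def by blast
  obtain c2 where c2: "odd y2 \<longrightarrow> Y2 = 8 * c2 + 1"
    using odd_square_mod_8 unfolding Y2_def by blast
  obtain d1 where d1: "odd x1 \<longrightarrow> X1 = 8 * d1 + 1"
    using odd_square_mod_8 unfolding X1_def by blast
  obtain d2 where d2: "odd x2 \<longrightarrow> X2 = 8 * d2 + 1"
    using odd_square_mod_8 unfolding X2_def by blast
  obtain t1 e1 where t1: "even x1 \<longrightarrow> x1 = 2 * t1 \<and> X1 = 16 * e1 + (if even t1 then 0 else 4)"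
    using even_square_mod_16 unfolding X1_def by blast
  obtain t2 e2 where t2: "even x2 \<longrightarrow> x2 = 2 * t2 \<and> X2 = 16 * e2 + (if even t2 then 0 else 4)"
    using even_square_mod_16 unfolding X2_def by blast
  have comp: "compatible 8 ((a, b), (c, d)) \<longleftrightarrow> 2 dvd d - b \<and> 4 dvd c - a" for a b c d
    by (simp add: omega_norm_def)
  show "even A \<Longrightarrow> compatible 8 ((x1, y1), (x2, y2))"
  proof -
    assume "even A"
    then have "even x1" "even x2" using l1 l2 a1 a2 d1 d2 by presburger+
    then have x1: "x1 = 2 * t1" "X1 = 16 * e1 + (if even t1 then 0 else 4)"
      and x2: "x2 = 2 * t2" "X2 = 16 * e2 + (if even t2 then 0 else 4)"
      using t1 t2 by auto
    have y: "even y1 \<longleftrightarrow> even y2" using l1 l2 a1 a2 x1(2) x2(2) by presburger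
    have "even t1 \<longleftrightarrow> even t2"
    proof (cases "even y1")
      case True
      then show ?thesis using y l1 l2 a1 a2 x1(2) x2(2) by presburger
    next
      case False
      then show ?thesis using y l1 l2 c1 c2 x1(2) x2(2) by presburger
    qed
    then show ?thesis unfolding comp using y x1(1) x2(1) by presburger
  qed
  show "odd A \<Longrightarrow> compatible 8 ((x1, y1), (x2, y2)) \<longleftrightarrow> \<not> compatible 8 ((x1, y1), (- x2, y2))"
  proof -
    assume "odd A"
    then have "odd x1" "odd x2" using l1 l2 t1 t2 by presburger+
    then have "X1 = 8 * d1 + 1" "X2 = 8 * d2 + 1" using d1 d2 by auto
    then have "even y1 \<longleftrightarrow> even y2" using l1 l2 a1 a2 by presburger
    then show ?thesis unfolding comp using \<open>odd x1\<close> \<open>odd x2\<close> by presburger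
  qed
qed

definition special :: "nat \<Rightarrow> int \<Rightarrow> bool" where
  "special q A = (if odd q then int q dvd A else even A)"

fun flip :: "nat \<Rightarrow> int \<times> int \<Rightarrow> int \<times> int" where
  "flip q (x, y) = (if odd q then (- x, - y) else if q = 4 then (y, x) else (- x, y))"

lemma flip_flip [simp]: "flip q (flip q p) = p"
  by (cases p) auto

lemma norm_form_flip: "q \<in> q_vals \<Longrightarrow> norm_form q (flip q p) = norm_form q p"
  by (cases p) (auto simp: omega_trace_def omega_norm_def power2_eq_square algebra_simps)

lemma compatible_if_special:
  assumes q: "q \<in> q_vals" and "special q A"
    and u: "norm_form q u = A" and v: "norm_form q v = A + int q"
  shows "compatible q (u, v)"
proof -
  obtain x1 y1 x2 y2 where uv: "u = (x1, y1)" "v = (x2, y2)" by fastforce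
  from q show ?thesis
  proof (cases rule: q_vals_odd_or_four_or_eight)
    case odd
    then show ?thesis
      using compatible_odd(1)[OF q odd] assms unfolding uv by (simp add: special_def)
  next
    case four
    then show ?thesis
      using compatible_four(1)[of x1 y1 A x2 y2] assms unfolding uv by (simp add: special_def)
  next
    case eight
    then show ?thesis
      using compatible_eight(1)[of x1 y1 A x2 y2] assms unfolding uv by (simp add: special_def)
  qed
qed

lemma compatible_flip_iff:
  assumes q: "q \<in> q_vals" and "\<not> special q A"
    and u: "norm_form q u = A" and v: "norm_form q v = A + int q"
  shows "compatible q (u, v) \<longleftrightarrow> \<not> compatible q (u, flip q v)"
proof -
  obtain x1 y1 x2 y2 where uv: "u = (x1, y1)" "v = (x2, y2)" by fastforce
  from q show ?thesis
  proof (cases rule: q_vals_odd_or_four_or_eight)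
    case odd
    then show ?thesis
      using compatible_odd(2)[OF q odd] assms unfolding uv by (simp add: special_def)
  next
    case four
    then show ?thesis
      using compatible_four(2)[of x1 y1 A x2 y2] assms unfolding uv by (simp add: special_def)
  next
    case eight
    then show ?thesis
      using compatible_eight(2)[of x1 y1 A x2 y2] assms unfolding uv by (simp add: special_def)
  qed
qed

lemma card_compatible_partners:
  assumes q: "q \<in> q_vals" and u: "norm_form q u = A"
  shows "2 * card {v \<in> reps q (A + int q). compatible q (u, v)}
           = (if special q A then 2 else 1) * card (reps q (A + int q))"
proof (cases "special q A")
  case True
  then have "{v \<in> reps q (A + int q). compatible q (u, v)} = reps q (A + int q)"
    using compatible_if_special[OF q _ u] by (auto simp: reps_def)
  then show ?thesis using True by simp
next
  case False
  have "2 * card {v \<in> reps q (A + int q). compatible q (u, v)} = card (reps q (A + int q))"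
  proof (rule card_half_by_involution[where s = "flip q"])
    show "finite (reps q (A + int q))" by (rule finite_reps[OF q])
    show "flip q v \<in> reps q (A + int q)" if "v \<in> reps q (A + int q)" for v
      using that norm_form_flip[OF q] by (simp add: reps_def)
    show "compatible q (u, v) \<longleftrightarrow> \<not> compatible q (u, flip q v)" if "v \<in> reps q (A + int q)" for v
      using that compatible_flip_iff[OF q False u] by (simp add: reps_def)
  qed simp
  then show ?thesis using False by simp
qed

definition compatible_pairs :: "nat \<Rightarrow> int \<Rightarrow> ((int \<times> int) \<times> (int \<times> int)) set" where
  "compatible_pairs q A =
     {(u, v). u \<in> reps q A \<and> v \<in> reps q (A + int q) \<and> compatible q (u, v)}"

lemma compatible_pairs_eq_Sigma:
  "compatible_pairs q A = (SIGMA u : reps q A. {v \<in> reps q (A + int q). compatible q (u, v)})"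
  unfolding compatible_pairs_def by auto

lemma mem_compatible_pairs:
  "w \<in> compatible_pairs q A \<longleftrightarrow>
     norm_form q (fst w) = A \<and> norm_form q (snd w) = A + int q \<and> compatible q w"
  by (cases w) (simp add: compatible_pairs_def reps_def)

lemma finite_compatible_pairs: assumes "q \<in> q_vals" shows "finite (compatible_pairs q A)"
  unfolding compatible_pairs_eq_Sigma using finite_reps[OF assms] by (intro finite_SigmaI) auto

lemma card_compatible_pairs:
  assumes q: "q \<in> q_vals"
  shows "2 * card (compatible_pairs q A)
           = (if special q A then 2 else 1) * card (reps q A) * card (reps q (A + int q))"
proof -
  have "2 * card (compatible_pairs q A)
        = (\<Sum>u\<in>reps q A. 2 * card {v \<in> reps q (A + int q). compatible q (u, v)})"
    unfolding compatible_pairs_eq_Sigma using finite_reps[OF q]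
    by (simp add: sum_distrib_left)
  also have "\<dots> = (\<Sum>u\<in>reps q A. (if special q A then 2 else 1) * card (reps q (A + int q)))"
    by (intro sum.cong refl card_compatible_partners[OF q]) (simp add: reps_def)
  finally show ?thesis by simp
qed

definition SL_fibre :: "nat \<Rightarrow> real \<Rightarrow> (int \<times> int \<times> int \<times> int) set" where
  "SL_fibre q n = {g \<in> SL2Z. R_SL q g = n}"

lemma bij_betw_SL_fibre_compatible_pairs:
  assumes q: "q \<in> q_vals" and n: "n = real q / 2 + of_int A"
  shows "bij_betw (matrix_to_pair q) (SL_fibre q n) (compatible_pairs q A)"
proof (rule bij_betw_byWitness[where f' = "pair_to_matrix q"])
  have norm_snd: "norm_form q (snd (matrix_to_pair q g))
                    = norm_form q (fst (matrix_to_pair q g)) + int q * (a * d - b * c)"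
    if "g = (a, b, c, d)" for g a b c d
    unfolding that by (rule norm_form_snd_matrix_to_pair[OF q])
  have R_eq: "R_SL q g = n \<longleftrightarrow> norm_form q (fst (matrix_to_pair q g)) = A" if "g \<in> SL2Z" for g
    using R_SL_eq[OF q that] n by simp
  show "\<forall>g \<in> SL_fibre q n. pair_to_matrix q (matrix_to_pair q g) = g"
    using pair_to_matrix_to_pair[OF q] by blast
  show "\<forall>w \<in> compatible_pairs q A. matrix_to_pair q (pair_to_matrix q w) = w"
    using matrix_to_pair_to_matrix[OF q] mem_compatible_pairs by blast
  show "matrix_to_pair q ` SL_fibre q n \<subseteq> compatible_pairs q A"
  proof
    fix w assume "w \<in> matrix_to_pair q ` SL_fibre q n"
    then obtain g where g: "g \<in> SL2Z" "R_SL q g = n" "w = matrix_to_pair q g"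
      unfolding SL_fibre_def by blast
    obtain a b c d where abcd: "g = (a, b, c, d)" by (cases g rule: prod_cases4)
    have "a * d - b * c = 1" using g(1) by (simp add: abcd SL2Z_def)
    then show "w \<in> compatible_pairs q A"
      unfolding mem_compatible_pairs g(3) norm_snd[OF abcd]
      using R_eq[OF g(1)] g(2) compatible_matrix_to_pair[OF q] by simp
  qed
  show "pair_to_matrix q ` compatible_pairs q A \<subseteq> SL_fibre q n"
  proof
    fix g assume "g \<in> pair_to_matrix q ` compatible_pairs q A"
    then obtain w where w: "w \<in> compatible_pairs q A" "g = pair_to_matrix q w" by blast
    then have g: "matrix_to_pair q g = w"
      using matrix_to_pair_to_matrix[OF q] mem_compatible_pairs by blast
    obtain a b c d where abcd: "g = (a, b, c, d)" by (cases g rule: prod_cases4)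
    have nf: "norm_form q (fst w) = A" "norm_form q (snd w) = A + int q"
      using w(1) mem_compatible_pairs by auto
    then have "A + int q = A + int q * (a * d - b * c)"
      using norm_snd[OF abcd] unfolding g by simp
    then have "g \<in> SL2Z" using q_vals_pos[OF q] by (simp add: abcd SL2Z_def)
    then show "g \<in> SL_fibre q n"
      using R_eq[OF \<open>g \<in> SL2Z\<close>] nf(1) g unfolding SL_fibre_def by simp
  qed
qed

definition pm_class :: "int \<times> int \<times> int \<times> int \<Rightarrow> (int \<times> int \<times> int \<times> int) set" where
  "pm_class g = {g, negm g}"

lemma mob_negm: "mob (negm g) z = mob g z"
proof (cases g rule: prod_cases4)
  case (fields a b c d)
  have "(- of_int a * z + - of_int b) / (- of_int c * z + - of_int d)
        = (of_int a * z + of_int b) / (of_int c * z + of_int d :: complex)"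
    by (metis minus_add_distrib minus_divide_divide mult_minus_left)
  then show ?thesis by (simp add: fields)
qed

lemma negm_negm [simp]: "negm (negm g) = g"
  by (cases g rule: prod_cases4) simp

lemma negm_SL2Z: "g \<in> SL2Z \<Longrightarrow> negm g \<in> SL2Z"
  by (cases g rule: prod_cases4) (simp add: SL2Z_def)

lemma negm_neq_SL2Z: "g \<in> SL2Z \<Longrightarrow> negm g \<noteq> g"
  by (cases g rule: prod_cases4) (auto simp: SL2Z_def)

lemma R_SL_negm: "R_SL q (negm g) = R_SL q g"
  unfolding R_SL_def mob_negm ..

lemma Rq_pm_class: "Rq q (pm_class g) = R_SL q g"
proof -
  have "(SOME h. h \<in> pm_class g) \<in> pm_class g"
    by (rule someI[of _ g]) (simp add: pm_class_def)
  then have "mob (SOME h. h \<in> pm_class g) (zq q) = mob g (zq q)"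
    unfolding pm_class_def by (metis empty_iff insert_iff mob_negm)
  then show ?thesis unfolding Rq_def R_SL_def pact_def by simp
qed

lemma Gamma_n_eq_image_SL_fibre: "Gamma_n q n = pm_class ` SL_fibre q n"
  unfolding Gamma_n_def PSL2Z_def SL_fibre_def pm_class_def[symmetric]
  by (auto simp: Rq_pm_class)

lemma card_SL_fibre:
  assumes "finite (SL_fibre q n)"
  shows "card (SL_fibre q n) = 2 * card (Gamma_n q n)"
proof -
  have "\<Union> (pm_class ` SL_fibre q n) = SL_fibre q n"
    unfolding pm_class_def SL_fibre_def using negm_SL2Z R_SL_negm by auto
  moreover have "2 * card (pm_class ` SL_fibre q n) = card (\<Union> (pm_class ` SL_fibre q n))"
  proof (rule card_partition)
    show "card C = 2" if "C \<in> pm_class ` SL_fibre q n" for C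
      using that negm_neq_SL2Z unfolding pm_class_def SL_fibre_def by auto
    show "C1 \<inter> C2 = {}" if "C1 \<in> pm_class ` SL_fibre q n" "C2 \<in> pm_class ` SL_fibre q n" "C1 \<noteq> C2"
      for C1 C2
      using that unfolding pm_class_def by (auto simp: negm_negm)
  qed (use assms calculation in auto)
  ultimately show ?thesis by (simp add: Gamma_n_eq_image_SL_fibre)
qed

lemma cn_eq_special:
  assumes q: "q \<in> q_vals" and n: "n = real q / 2 + of_int A"
  shows "cn q n = (if special q A then 1 / 2 else 1 / 4)"
proof -
  have odd_iff: "(\<exists>k::int. 2 * n = real q * of_int k) \<longleftrightarrow> int q dvd 2 * A + int q"
  proof -
    have "2 * n = real q * of_int k \<longleftrightarrow> 2 * A + int q = int q * k" for k :: int
    proof -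
      have "2 * n = of_int (2 * A + int q)" "real q * of_int k = of_int (int q * k)"
        using n by simp_all
      then show ?thesis by (simp only: of_int_eq_iff)
    qed
    then show ?thesis by (auto simp: dvd_def)
  qed
  have even_iff: "(\<exists>k::int. n = 2 * of_int k) \<longleftrightarrow> even A" if "q = 4 \<or> q = 8"
  proof -
    have "n = of_int (2 * omega_norm q + A)"
      using n that by (auto simp: omega_norm_def)
    then have "n = 2 * of_int k \<longleftrightarrow> 2 * omega_norm q + A = 2 * k" for k :: int
      by (metis of_int_eq_iff of_int_mult of_int_numeral)
    moreover have "(\<exists>k. 2 * omega_norm q + A = 2 * k) \<longleftrightarrow> even A"
      by (metis dvd_add_right_iff dvd_def dvd_triv_left)
    ultimately show ?thesis by simp
  qed
  have dvd_iff: "int q dvd 2 * A + int q \<longleftrightarrow> int q dvd A" if "odd q"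
    using that by (simp add: dvd_add_left_iff coprime_dvd_mult_right_iff)
  from q show ?thesis
    by (cases rule: q_vals_cases) (use odd_iff even_iff dvd_iff in \<open>auto simp: cn_def special_def\<close>)
qed

theorem proposition1p3:
  fixes q :: nat and n :: real
  assumes "q \<in> q_vals"
    and "n \<in> Nset q"
  shows "real (card (Gamma_n q n)) =
           cn q n * real (rK q (n - 2 * (lam q)\<^sup>2)) * real (rK q (n + 2 * (lam q)\<^sup>2))"
proof -
  note q = assms(1)
  obtain g where g: "g \<in> SL2Z" "n = R_SL q g"
    using assms(2) unfolding Nset_def PSL2Z_def pm_class_def[symmetric] by (auto simp: Rq_pm_class)
  define A where "A = norm_form q (fst (matrix_to_pair q g))"
  have n: "n = real q / 2 + of_int A"
    using R_SL_eq[OF q g(1)] g(2) unfolding A_def by simp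
  note bij = bij_betw_SL_fibre_compatible_pairs[OF q n]
  have "card (SL_fibre q n) = 2 * card (Gamma_n q n)"
    using bij finite_compatible_pairs[OF q] by (intro card_SL_fibre) (simp add: bij_betw_finite)
  then have "real (4 * card (Gamma_n q n))
             = real ((if special q A then 2 else 1) * card (reps q A) * card (reps q (A + int q)))"
    using card_compatible_pairs[OF q, of A] bij_betw_same_card[OF bij] by simp
  moreover have "n - 2 * (lam q)\<^sup>2 = of_int A" and "n + 2 * (lam q)\<^sup>2 = of_int (A + int q)"
    by (simp_all add: n lam_squared)
  ultimately show ?thesis
    unfolding cn_eq_special[OF q n] by (cases "special q A") (simp_all only: rK_eq_card_reps[OF q], simp_all)
qed

end
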